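(* Let $q=2^n$ with $n\ge 1$, and let $\mathbb{K}=\mathbb{F}_q(Y)$ where $Y$ is transcendental over $\mathbb{F}_q$. If $k>0$ is odd, then the polynomial $G(X)=\prod_{w\in\mathbb{F}_q^\times}\bigl(D_k(wX)-Y\bigr)\in\mathbb{K}[X]$ has no repeated roots in an algebraic closure $\overline{\mathbb{K}}$ of $\mathbb{K}$.
   Context: The $k$th Dickson polynomial $D_k(x)\in\mathbb{Z}[x]$ is defined by $D_0(x)=2$, $D_1(x)=x$, and $D_k(x)=xD_{k-1}(x)-D_{k-2}(x)$ for $k\ge 2$; equivalently it satisfies $D_k(u+1/u)=u^k+u^{-k}$. Here $D_k$ is regarded as a polynomial over $\mathbb{F}_q$ via reduction of its integer coefficients modulo $2$. *)

theory Defs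
  imports "HOL-Computational_Algebra.Computational_Algebra" "HOL-Library.Cardinality"
begin

text \<open>Dickson polynomials D_0 = 2, D_1 = X, D_(k+2) = X * D_(k+1) - D_k, over any
  commutative ring; over a ring of characteristic 2 this is the reduction mod 2 of the
  integer Dickson polynomial.\<close>
fun dickson :: "nat \<Rightarrow> 'a::comm_ring_1 poly" where
  "dickson 0 = [:2:]"
| "dickson (Suc 0) = [:0, 1:]"
| "dickson (Suc (Suc k)) = [:0, 1:] * dickson (Suc k) - dickson k"

text \<open>The rational function field F_q(Y) is modelled as \<open>'a poly fract\<close>;
  constants of F_q and the transcendental Y embed as follows.\<close>
definition const_rf :: "'a::field \<Rightarrow> 'a poly fract" where
  "const_rf c = Fract [:c:] 1"

definition Y_rf :: "'a::field poly fract" where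
  "Y_rf = Fract [:0, 1:] 1"

definition G_poly :: "nat \<Rightarrow> ('a::{finite,field}) poly fract poly" where
  "G_poly k = (\<Prod>w\<in>UNIV - {0::'a}. pcompose (dickson k) [:0, const_rf w:] - [:Y_rf:])"

end

theory Submission
  imports Defs
begin

(* In characteristic 2 the Dickson polynomial D of odd degree satisfies D = X * D', so for
   c, y nonzero every root a of D(cX) - y is simple: D'(ca) = 0 would force y = D(ca) = 0.
   Distinct factors, for c and dc with d <> 1, have no common root: if D(z) = D(dz) = y, the
   Frobenius identity D(x^2) = D(x)^2 makes every z^(2^m) a root of D(d^(2^m) X) - D, which is
   nonzero because d^(2^m) <> 1 (compare the two top coefficients of D).  As d^(2^m) ranges
   over the finite group F_q^*, the z^(2^m) repeat, hence so do the y^(2^m); this is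
   impossible when y is the image of the transcendental Y. *)

lemma two_eq_zero_if_even_card:
  assumes "even CARD('a::{finite,idom})"
  shows "(2::'a) = 0"
proof (rule ccontr)
  assume "(2::'a) \<noteq> 0"
  define P where "P = (\<lambda>x. {x, - x}) ` (UNIV - {0::'a})"
  have "- x \<noteq> x" if "x \<noteq> 0" for x :: 'a
  proof
    assume "- x = x"
    then have "2 * x = 0"
      by (metis add.right_inverse mult_2)
    then show False
      using \<open>(2::'a) \<noteq> 0\<close> that by simp
  qed
  then have "card {x, - x} = 2" if "x \<noteq> 0" for x :: 'a
    using that by (metis card_2_iff)
  then have "card p = 2" if "p \<in> P" for p
    using that unfolding P_def by blast
  moreover have "p \<inter> p' = {}" if "p \<in> P" "p' \<in> P" "p \<noteq> p'" for p p'
    using that unfolding P_def by (auto simp del: minus_equation_iff)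
  ultimately have "2 * card P = card (\<Union>P)"
    by (intro card_partition) auto
  also have "\<Union>P = UNIV - {0}"
    unfolding P_def by auto
  finally have "CARD('a) - 1 = 2 * card P"
    by (simp add: card_Diff_singleton)
  then show False
    using assms zero_less_card_finite[where 'a='a] by presburger
qed

lemma square_eq_1_char2:
  fixes e :: "'a::idom"
  assumes "(2::'a) = 0" and "e\<^sup>2 = 1"
  shows "e = 1"
proof -
  have "(e - 1)\<^sup>2 = e\<^sup>2 - 2 * e + 1"
    by (simp add: power2_eq_square algebra_simps)
  also have "\<dots> = 0"
    using assms by simp
  finally show ?thesis
    by simp
qed

lemma power2_power_eq_1_char2:
  fixes e :: "'a::idom"
  assumes "(2::'a) = 0" and "e ^ 2 ^ m = 1"
  shows "e = 1"
  using assms(2)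
proof (induction m)
  case (Suc m)
  then have "(e ^ 2 ^ m)\<^sup>2 = 1"
    by (simp add: power_mult[symmetric] mult.commute)
  then show ?case
    using Suc.IH square_eq_1_char2[OF assms(1)] by blast
qed simp

lemma coeff_dickson_above: "k < j \<Longrightarrow> coeff (dickson k :: 'a::comm_ring_1 poly) j = 0"
proof (induction k arbitrary: j rule: dickson.induct)
  case (3 k)
  then show ?case by (cases j) (auto simp: coeff_pCons)
qed (auto simp: coeff_pCons split: nat.splits)

lemma coeff_dickson_self: "0 < k \<Longrightarrow> coeff (dickson k :: 'a::comm_ring_1 poly) k = 1"
proof (induction k rule: dickson.induct)
  case (3 k)
  then show ?case by (cases k) (auto simp: coeff_dickson_above)
qed auto

lemma coeff_dickson_Suc_Suc:
  "coeff (dickson (Suc (Suc k)) :: 'a::comm_ring_1 poly) k = - of_nat (k + 2)"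
proof (induction k)
  case (Suc k)
  have "coeff (dickson (Suc (Suc (Suc k))) :: 'a poly) (Suc k) =
        coeff (dickson (Suc (Suc k)) :: 'a poly) k - coeff (dickson (Suc k) :: 'a poly) (Suc k)"
    by (simp del: dickson.simps(3) add: dickson.simps(3)[of "Suc k"])
  then show ?case
    using Suc coeff_dickson_self[of "Suc k", where 'a='a] by simp
qed simp

lemma pderiv_dickson_char2:
  assumes "(2::'a::idom) = 0"
  shows "(odd k \<longrightarrow> (dickson k :: 'a poly) = [:0, 1:] * pderiv (dickson k)) \<and>
         (even k \<longrightarrow> pderiv (dickson k :: 'a poly) = 0)"
proof (induction k rule: dickson.induct)
  case (3 k)
  let ?X = "[:0, 1:] :: 'a poly"
  have rec: "dickson (Suc (Suc k)) = ?X * dickson (Suc k) - dickson k"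
    by simp
  have deriv: "pderiv (dickson (Suc (Suc k))) =
      dickson (Suc k) + ?X * pderiv (dickson (Suc k)) - pderiv (dickson k)"
    unfolding rec by (simp add: pderiv_mult pderiv_diff pderiv_pCons)
  show ?case
  proof (cases "even k")
    case True
    then have "dickson (Suc k) = ?X * pderiv (dickson (Suc k))"
      and "pderiv (dickson k :: 'a poly) = 0"
      using 3 by simp_all
    moreover have "p + p = 0" for p :: "'a poly"
      using assms by (metis mult_2 mult_zero_left of_nat_numeral of_nat_poly pCons_0_0)
    ultimately have "pderiv (dickson (Suc (Suc k)) :: 'a poly) = 0"
      using deriv by (metis diff_zero)
    then show ?thesis
      using True by simp
  next
    case False
    then have D1: "pderiv (dickson (Suc k) :: 'a poly) = 0"
      and D0: "dickson k = ?X * pderiv (dickson k)"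
      using 3 by simp_all
    have "?X * pderiv (dickson (Suc (Suc k))) = ?X * dickson (Suc k) - ?X * pderiv (dickson k)"
      by (simp only: deriv D1 mult_zero_right add_0_right right_diff_distrib)
    also have "\<dots> = dickson (Suc (Suc k))"
      by (simp only: rec D0[symmetric])
    finally show ?thesis
      using False by simp
  qed
qed (simp_all add: pderiv_pCons)

lemma poly_dickson_square_char2:
  fixes x :: "'a::comm_ring_1"
  assumes "(2::'a) = 0"
  shows "poly (dickson k) (x\<^sup>2) = (poly (dickson k) x)\<^sup>2"
proof (induction k rule: dickson.induct)
  case (3 k)
  have square_diff: "(a - b)\<^sup>2 = a\<^sup>2 - b\<^sup>2" for a b :: 'a
  proof -
    have "(a - b)\<^sup>2 = a\<^sup>2 - b\<^sup>2 + 2 * b * (b - a)"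
      by (simp add: power2_eq_square algebra_simps)
    then show ?thesis
      using assms by simp
  qed
  then show ?case
    using 3 by (simp add: square_diff power_mult_distrib)
qed (simp_all add: assms)

lemma poly_dickson_power2_char2:
  fixes x :: "'a::comm_ring_1"
  assumes "(2::'a) = 0"
  shows "poly (dickson k) (x ^ 2 ^ m) = poly (dickson k) x ^ 2 ^ m"
proof (induction m)
  case (Suc m)
  then show ?case
    using poly_dickson_square_char2[OF assms, of k "x ^ 2 ^ m"]
    by (simp add: power_mult[symmetric] mult.commute)
qed simp

lemma dickson_dilate_neq_char2:
  fixes e :: "'a::idom"
  assumes two: "(2::'a) = 0" and "odd k" and "e \<noteq> 1"
  shows "pcompose (dickson k) [:0, e:] \<noteq> dickson k"
proof
  assume eq: "pcompose (dickson k) [:0, e:] = dickson k"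
  have coeff_eq: "(e ^ j - 1) * coeff (dickson k :: 'a poly) j = 0" for j
    using arg_cong[OF eq, of "\<lambda>p. coeff p j"] by (simp add: coeff_pcompose_linear algebra_simps)
  have "e ^ k = 1"
    using coeff_eq[of k] coeff_dickson_self[of k, where 'a='a] \<open>odd k\<close> by (simp add: odd_pos)
  show False
  proof (cases "k = 1")
    case True
    then show False
      using \<open>e ^ k = 1\<close> \<open>e \<noteq> 1\<close> by simp
  next
    case False
    define j where "j = k - 2"
    have j: "k = Suc (Suc j)"
      using \<open>odd k\<close> False unfolding j_def by (cases k) auto
    have "(of_nat (j + 2) :: 'a) = 1"
      using \<open>odd k\<close> two j by (auto elim!: oddE)
    then have "coeff (dickson k :: 'a poly) j = - 1"
      unfolding j by (simp only: coeff_dickson_Suc_Suc)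
    then have "e ^ j = 1"
      using coeff_eq[of j] by simp
    then have "e\<^sup>2 = 1"
      using \<open>e ^ k = 1\<close> j by (simp add: power2_eq_square)
    then show False
      using square_eq_1_char2[OF two] \<open>e \<noteq> 1\<close> by blast
  qed
qed

lemma rsquarefreeI_pderiv:
  fixes p :: "'a::idom poly"
  assumes "p \<noteq> 0" and "\<And>a. poly p a = 0 \<Longrightarrow> poly (pderiv p) a \<noteq> 0"
  shows "rsquarefree p"
  unfolding rsquarefree_def
proof (intro conjI allI assms(1))
  fix a
  show "order a p = 0 \<or> order a p = 1"
  proof (rule ccontr)
    assume "\<not> (order a p = 0 \<or> order a p = 1)"
    then have "[:-a, 1:] ^ 2 dvd p"
      by (auto simp: order_divides)
    then obtain r where "p = [:-a, 1:] ^ 2 * r"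
      by (elim dvdE)
    then have "p = [:-a, 1:] * ([:-a, 1:] * r)"
      by (simp only: power2_eq_square mult.assoc)
    moreover have "poly [:-a, 1:] a = 0"
      by simp
    ultimately have "poly p a = 0" and "poly (pderiv p) a = 0"
      by (simp_all only: pderiv_mult poly_mult poly_add mult_zero_left mult_zero_right add_0)
    then show False
      using assms(2) by blast
  qed
qed

lemma rsquarefree_mult:
  fixes p q :: "'a::idom poly"
  assumes "rsquarefree p" and "rsquarefree q" and "\<And>a. poly p a = 0 \<Longrightarrow> poly q a \<noteq> 0"
  shows "rsquarefree (p * q)"
  unfolding rsquarefree_def
proof (intro conjI allI)
  have "p \<noteq> 0" "q \<noteq> 0"
    using assms(1,2) by (simp_all add: rsquarefree_def)
  then show pq: "p * q \<noteq> 0"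
    by simp
  fix a
  have "order a p \<le> 1" "order a q \<le> 1"
    using assms(1,2) unfolding rsquarefree_def by (metis le_refl zero_le)+
  moreover have "order a p = 0 \<or> order a q = 0"
    using assms(3) order_root by blast
  ultimately show "order a (p * q) = 0 \<or> order a (p * q) = 1"
    using pq by (auto simp: order_mult)
qed

lemma rsquarefree_prod:
  fixes p :: "'b \<Rightarrow> 'a::idom poly"
  assumes "finite A" and "\<And>i. i \<in> A \<Longrightarrow> rsquarefree (p i)"
    and "\<And>i j a. i \<in> A \<Longrightarrow> j \<in> A \<Longrightarrow> i \<noteq> j \<Longrightarrow> poly (p i) a = 0 \<Longrightarrow> poly (p j) a \<noteq> 0"
  shows "rsquarefree (\<Prod>i\<in>A. p i)"
  using assms
proof (induction A rule: finite_induct)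
  case empty
  then show ?case
    by (simp add: rsquarefree_def)
next
  case (insert i A)
  have "poly (\<Prod>j\<in>A. p j) a \<noteq> 0" if "poly (p i) a = 0" for a
    using insert.hyps insert.prems(2)[of i _ a] that by (auto simp: poly_prod)
  moreover have "rsquarefree (\<Prod>j\<in>A. p j)"
    using insert.prems by (intro insert.IH) blast+
  ultimately show ?case
    using insert by (simp add: rsquarefree_mult)
qed

lemma rsquarefree_dickson_dilate_minus_const:
  fixes c y :: "'a::idom"
  assumes two: "(2::'a) = 0" and "odd k" and "c \<noteq> 0" and "y \<noteq> 0"
  shows "rsquarefree (pcompose (dickson k) [:0, c:] - [:y:])"
proof (rule rsquarefreeI_pderiv)
  let ?D = "dickson k :: 'a poly"
  have X_pderiv: "?D = [:0, 1:] * pderiv ?D"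
    using pderiv_dickson_char2[OF two] \<open>odd k\<close> by blast
  have D: "poly ?D x = x * poly (pderiv ?D) x" for x
    by (subst X_pderiv) simp
  have "poly (pcompose ?D [:0, c:] - [:y:]) 0 = - y"
    using D[of 0] by (simp add: poly_pcompose)
  then show "pcompose ?D [:0, c:] - [:y:] \<noteq> 0"
    using \<open>y \<noteq> 0\<close> by auto
  fix a
  assume "poly (pcompose ?D [:0, c:] - [:y:]) a = 0"
  then have "poly ?D (a * c) = y"
    by (simp add: poly_pcompose)
  show "poly (pderiv (pcompose ?D [:0, c:] - [:y:])) a \<noteq> 0"
  proof
    assume "poly (pderiv (pcompose ?D [:0, c:] - [:y:])) a = 0"
    then have "poly (pderiv ?D) (a * c) = 0"
      using \<open>c \<noteq> 0\<close> by (simp add: pderiv_pcompose pderiv_diff pderiv_pCons poly_pcompose)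
    then have "poly ?D (a * c) = 0"
      using D by simp
    then show False
      using \<open>poly ?D (a * c) = y\<close> \<open>y \<noteq> 0\<close> by simp
  qed
qed

lemma dickson_collision_not_inj_power:
  fixes d z y :: "'a::idom"
  assumes two: "(2::'a) = 0" and "odd k" and "d \<noteq> 1" and "finite (range (\<lambda>m. d ^ 2 ^ m))"
    and z: "poly (dickson k) z = y" and dz: "poly (dickson k) (d * z) = y"
  shows "\<not> inj (\<lambda>n. y ^ n)"
proof
  assume inj_y: "inj (\<lambda>n. y ^ n)"
  let ?D = "dickson k :: 'a poly"
  define T where "T = (\<Union>e\<in>range (\<lambda>m. d ^ 2 ^ m). {x. poly (pcompose ?D [:0, e:] - ?D) x = 0})"
  have "finite T"
    unfolding T_def
  proof (intro finite_UN_I assms(4))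
    fix e assume "e \<in> range (\<lambda>m. d ^ 2 ^ m)"
    then obtain m where "e = d ^ 2 ^ m"
      by blast
    then have "e \<noteq> 1"
      using power2_power_eq_1_char2[OF two, of d m] \<open>d \<noteq> 1\<close> by auto
    then show "finite {x. poly (pcompose ?D [:0, e:] - ?D) x = 0}"
      using dickson_dilate_neq_char2[OF two \<open>odd k\<close>] by (intro poly_roots_finite) simp
  qed
  \<comment> \<open>Frobenius turns the collision at \<open>z\<close> with factor \<open>d\<close> into one at \<open>z ^ 2 ^ m\<close>
    with factor \<open>d ^ 2 ^ m\<close>.\<close>
  have "z ^ 2 ^ m \<in> T" for m
  proof -
    have "z ^ 2 ^ m * d ^ 2 ^ m = (d * z) ^ 2 ^ m"
      by (simp add: power_mult_distrib mult.commute)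
    then have "poly ?D (z ^ 2 ^ m * d ^ 2 ^ m) = poly ?D (z ^ 2 ^ m)"
      by (simp add: poly_dickson_power2_char2[OF two] z dz)
    then show ?thesis
      unfolding T_def by (auto simp: poly_pcompose)
  qed
  then have "finite (range (\<lambda>m. z ^ 2 ^ m))"
    using \<open>finite T\<close> by (meson finite_subset image_subsetI)
  then have "\<not> inj (\<lambda>m::nat. z ^ 2 ^ m)"
    using range_inj_infinite by blast
  then obtain m1 m2 :: nat where "m1 \<noteq> m2" and "z ^ 2 ^ m1 = z ^ 2 ^ m2"
    unfolding inj_def by blast
  then have "poly ?D (z ^ 2 ^ m1) = poly ?D (z ^ 2 ^ m2)"
    by simp
  then have "y ^ 2 ^ m1 = y ^ 2 ^ m2"
    by (simp add: poly_dickson_power2_char2[OF two] z)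
  then show False
    using inj_y \<open>m1 \<noteq> m2\<close> by (auto dest: injD)
qed

lemma rsquarefree_prod_dickson_dilates:
  fixes C :: "'a::field set" and y :: 'a
  assumes two: "(2::'a) = 0" and "odd k" and "finite C" and "0 \<notin> C"
    and div_closed: "\<And>a b. a \<in> C \<Longrightarrow> b \<in> C \<Longrightarrow> a / b \<in> C"
    and inj_y: "inj (\<lambda>n. y ^ n)"
  shows "rsquarefree (\<Prod>c\<in>C. pcompose (dickson k) [:0, c:] - [:y:])"
proof (rule rsquarefree_prod[OF \<open>finite C\<close>])
  have "y \<noteq> 0"
    using injD[OF inj_y, of 1 2] by auto
  then show "rsquarefree (pcompose (dickson k) [:0, c:] - [:y:])" if "c \<in> C" for c
    using rsquarefree_dickson_dilate_minus_const[OF two \<open>odd k\<close>] \<open>0 \<notin> C\<close> that by metis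
  have square_closed: "a\<^sup>2 \<in> C" if "a \<in> C" for a
  proof -
    have "a \<noteq> 0"
      using \<open>0 \<notin> C\<close> that by blast
    moreover have "a / (a / a / a) \<in> C" \<comment> \<open>this is \<open>a\<^sup>2\<close>\<close>
      using div_closed that by blast
    ultimately show ?thesis
      by (simp add: power2_eq_square)
  qed
  fix c c' a
  assume "c \<in> C" "c' \<in> C" "c \<noteq> c'"
    and "poly (pcompose (dickson k) [:0, c:] - [:y:]) a = 0"
  define d where "d = c' / c"
  have "d \<in> C" "d \<noteq> 1"
    unfolding d_def using div_closed \<open>c \<in> C\<close> \<open>c' \<in> C\<close> \<open>c \<noteq> c'\<close> \<open>0 \<notin> C\<close> by auto
  have "d ^ 2 ^ m \<in> C" for m
  proof (induction m)
    case (Suc m)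
    have "d ^ 2 ^ Suc m = (d ^ 2 ^ m)\<^sup>2"
      by (simp add: power_mult[symmetric] mult.commute)
    then show ?case
      using Suc square_closed by simp
  qed (use \<open>d \<in> C\<close> in simp)
  then have "finite (range (\<lambda>m. d ^ 2 ^ m))"
    using \<open>finite C\<close> by (meson finite_subset image_subsetI)
  moreover have "poly (dickson k) (a * c) = y"
    using \<open>poly (pcompose (dickson k) [:0, c:] - [:y:]) a = 0\<close> by (simp add: poly_pcompose)
  ultimately have "\<not> inj (\<lambda>n. y ^ n)" if "poly (dickson k) (d * (a * c)) = y"
    using dickson_collision_not_inj_power[OF two \<open>odd k\<close> \<open>d \<noteq> 1\<close>] that by blast
  moreover have "d * (a * c) = a * c'"
    unfolding d_def using \<open>0 \<notin> C\<close> \<open>c \<in> C\<close> by auto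
  ultimately show "poly (pcompose (dickson k) [:0, c':] - [:y:]) a \<noteq> 0"
    using inj_y by (auto simp: poly_pcompose)
qed

locale field_hom =
  fixes f :: "'a::field \<Rightarrow> 'b::field"
  assumes hom_add: "f (x + y) = f x + f y"
    and hom_mult: "f (x * y) = f x * f y"
    and hom_one: "f 1 = 1"
begin

lemma hom_zero: "f 0 = 0"
  using hom_add[of 0 0] by (metis add.right_neutral add_left_cancel)

lemma hom_uminus: "f (- x) = - f x"
  using hom_add[of x "- x"] by (metis hom_zero neg_eq_iff_add_eq_0 right_minus)

lemma hom_diff: "f (x - y) = f x - f y"
  using hom_add[of x "- y"] by (simp add: hom_uminus)

lemma hom_power: "f (x ^ n) = f x ^ n"
  by (induction n) (simp_all add: hom_one hom_mult)

lemma hom_of_nat: "f (of_nat n) = of_nat n"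
  by (induction n) (simp_all add: hom_zero hom_one hom_add)

lemma hom_eq_0_iff: "f x = 0 \<longleftrightarrow> x = 0"
  using hom_mult[of x "inverse x"] by (cases "x = 0") (auto simp: hom_zero hom_one)

lemma hom_inj: "inj f"
  by (rule injI) (metis hom_diff hom_eq_0_iff eq_iff_diff_eq_0)

lemma hom_divide: "f (x / y) = f x / f y"
  using hom_mult[of "x / y" y] by (cases "y = 0") (auto simp: hom_zero hom_eq_0_iff eq_divide_eq)

lemma inj_power_hom: "inj (\<lambda>n. x ^ n) \<Longrightarrow> inj (\<lambda>n. f x ^ n)"
  by (rule injI) (metis hom_power hom_inj injD)

lemma zero_notin_image_nonzero: "0 \<notin> f ` (UNIV - {0})"
proof
  assume "0 \<in> f ` (UNIV - {0})"
  then obtain u where "u \<noteq> 0" and "0 = f u"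
    by blast
  then show False
    using hom_eq_0_iff by simp
qed

lemma image_nonzero_divide_closed:
  assumes "a \<in> f ` (UNIV - {0})" and "b \<in> f ` (UNIV - {0})"
  shows "a / b \<in> f ` (UNIV - {0})"
proof -
  obtain u v where "u \<noteq> 0" "v \<noteq> 0" "a = f u" "b = f v"
    using assms by blast
  then show ?thesis
    by (simp add: hom_divide[symmetric])
qed

lemma map_poly_hom_add: "map_poly f (p + q) = map_poly f p + map_poly f q"
  by (rule poly_eqI) (simp add: coeff_map_poly hom_zero hom_add)

lemma map_poly_hom_diff: "map_poly f (p - q) = map_poly f p - map_poly f q"
  by (rule poly_eqI) (simp add: coeff_map_poly hom_zero hom_diff)

lemma map_poly_hom_mult: "map_poly f (p * q) = map_poly f p * map_poly f q"
  by (induction p) (simp_all add: map_poly_pCons map_poly_smult hom_zero hom_mult map_poly_hom_add)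

lemma map_poly_hom_prod: "map_poly f (\<Prod>i\<in>A. p i) = (\<Prod>i\<in>A. map_poly f (p i))"
  by (induction A rule: infinite_finite_induct) (simp_all add: hom_one map_poly_hom_mult)

lemma map_poly_hom_pcompose: "map_poly f (pcompose p q) = pcompose (map_poly f p) (map_poly f q)"
  by (induction p)
    (simp_all add: pcompose_pCons map_poly_pCons hom_zero map_poly_hom_add map_poly_hom_mult)

lemma map_poly_hom_dickson: "map_poly f (dickson k) = dickson k"
  by (induction k rule: dickson.induct)
    (simp_all add: map_poly_pCons hom_zero hom_one hom_of_nat[of 2, simplified]
      map_poly_hom_diff map_poly_hom_mult)

end

lemma field_hom_comp: "field_hom f \<Longrightarrow> field_hom g \<Longrightarrow> field_hom (f \<circ> g)"
  by (simp add: field_hom_def)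

lemma field_hom_const_rf: "field_hom const_rf"
  by unfold_locales (simp_all add: const_rf_def One_fract_def mult.commute flip: one_pCons)

lemma inj_power_Y_rf: "inj (\<lambda>n. Y_rf ^ n :: 'a::field poly fract)"
proof (rule injI)
  fix m n
  have Y_power: "Y_rf ^ i = (Fract ([:0, 1:] ^ i) 1 :: 'a poly fract)" for i
    by (induction i) (simp_all add: Y_rf_def One_fract_def)
  assume "Y_rf ^ m = (Y_rf ^ n :: 'a poly fract)"
  then have "([:0, 1:] ^ m :: 'a poly) = [:0, 1:] ^ n"
    by (simp add: Y_power eq_fract)
  then have "degree ([:0, 1:] ^ m :: 'a poly) = degree ([:0, 1:] ^ n :: 'a poly)"
    by simp
  then show "m = n"
    by (simp add: degree_power_eq)
qed

theorem lemma2: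
  fixes n k :: nat
    and f :: "('a::{finite,field}) poly fract \<Rightarrow> 'L::alg_closed_field"
  assumes "n \<ge> 1"
    and "CARD('a) = 2 ^ n"
    and "odd k" and "k > 0"
    and "f 0 = 0" and "f 1 = 1"
    and "\<And>x y. f (x + y) = f x + f y"
    and "\<And>x y. f (x * y) = f x * f y"
  shows "rsquarefree (map_poly f (G_poly k :: 'a poly fract poly))"
proof -
  interpret f: field_hom f
    by unfold_locales (use assms in auto)
  define c where "c = f \<circ> const_rf"
  interpret c: field_hom c
    unfolding c_def by (intro field_hom_comp field_hom_const_rf f.field_hom_axioms)
  have "(2::'a) = 0"
    using assms(1,2) by (intro two_eq_zero_if_even_card) simp
  then have two: "(2::'L) = 0"
    using c.hom_of_nat[of 2] c.hom_zero by simp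
  have "map_poly f (G_poly k) = (\<Prod>w\<in>UNIV - {0}. pcompose (dickson k) [:0, c w:] - [:f Y_rf:])"
    by (simp add: G_poly_def f.map_poly_hom_prod f.map_poly_hom_diff f.map_poly_hom_pcompose
        f.map_poly_hom_dickson map_poly_pCons f.hom_zero c_def)
  also have "\<dots> = (\<Prod>x\<in>c ` (UNIV - {0}). pcompose (dickson k) [:0, x:] - [:f Y_rf:])"
    using c.hom_inj by (simp add: prod.reindex inj_on_def)
  finally show ?thesis
    using rsquarefree_prod_dickson_dilates[OF two \<open>odd k\<close> _ c.zero_notin_image_nonzero
        c.image_nonzero_divide_closed f.inj_power_hom[OF inj_power_Y_rf]]
    by simp
qed

end
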